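(* Let $m\in\mathbb{N}$ and $V\in H_{+}^{-m}$ be a 1-periodic complex-valued distribution, and let $S_\pm(V)=D_{\pm}^{2m}\dotplus V$ be the associated form-sum operators on $L_2(0,1)$. Then the resolvent sets of $S_{\pm}(V)$ are non-empty, and the resolvents $R(\lambda,S_{\pm}(V))$ are compact.
   Context: For $s\in\mathbb{R}$, $H_{+}^{s}$ is the space of formal series $f=\sum_{k\in\mathbb{Z}}\widehat f(2k)e^{i2k\pi x}$ with $\|f\|_{H_+^s}^2=\sum_k\langle 2k\rangle^{2s}|\widehat f(2k)|^2<\infty$, and $H_{-}^{s}$ is the space of formal series $f=\sum_{k}\widehat f(2k+1)e^{i(2k+1)\pi x}$ with $\|f\|_{H_-^s}^2=\sum_k\langle 2k+1\rangle^{2s}|\widehat f(2k+1)|^2<\infty$, where $\langle k\rangle=1+|k|$; $H_\pm^0=L_2(0,1)$. $\langle\cdot,\cdot\rangle_{\pm}$ is the pairing between $H_\pm^{s}$ and $H_\pm^{-s}$ extending the $L_2(0,1)$ inner product. $D_\pm^{2m}=|{-i\,d/dx}|^{2m}$ acts as multiplication by $(n\pi)^{2m}$ on the mode $e^{in\pi x}$. For $u\in H_\pm^{m}$, $V(x)u=\sum_n\big(\sum_j\widehat V(n-j)\widehat u(j)\big)e^{in\pi x}\in H_\pm^{-m}$. $S_\pm(V)$ is the $m$-sectorial operator associated with the closed sectorial form $\langle D_{\pm}^{2m}u,v\rangle_{\pm}+\langle V(x)u,v\rangle_{\pm}$ on $H_\pm^m$; explicitly $\mathrm{Dom}(S_{\pm})=\{u\in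 H_{\pm}^{m}\mid D_{\pm}^{2m}u+V(x)u\in L_{2}(0,1)\}$, $S_\pm(V)u=D_{\pm}^{2m}u+V(x)u$. $R(\lambda,A)=(A-\lambda I)^{-1}$. *)

theory Defs
  imports "HOL-Analysis.Analysis"
begin

text \<open>Elements of the spaces H_+^s / H_-^s are represented by their Fourier
coefficient sequences f :: int => complex, where f n is the coefficient of
the mode e^{i n pi x}.  The flag p = True stands for the sign "+" (only even
frequencies n = 2k occur), p = False for the sign "-" (only odd frequencies
n = 2k+1 occur).  H_p^0 is L_2(0,1), written
in the orthonormal basis (e^{i n pi x})_{n in freqs p}.\<close>

definition freqs :: "bool \<Rightarrow> int set" where
  "freqs p = (if p then {n. even n} else {n. odd n})"

definition bracket :: "int \<Rightarrow> real" where
  "bracket n = 1 + real_of_int \<bar>n\<bar>"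

definition Hs :: "bool \<Rightarrow> real \<Rightarrow> (int \<Rightarrow> complex) set" where
  "Hs p s = {f. (\<forall>n. n \<notin> freqs p \<longrightarrow> f n = 0) \<and>
                (\<lambda>n. bracket n powr (2 * s) * (cmod (f n))\<^sup>2) summable_on UNIV}"

definition l2norm :: "(int \<Rightarrow> complex) \<Rightarrow> real" where
  "l2norm f = sqrt (\<Sum>\<^sub>\<infinity>n. (cmod (f n))\<^sup>2)"

definition Dpow :: "nat \<Rightarrow> (int \<Rightarrow> complex) \<Rightarrow> (int \<Rightarrow> complex)" where
  "Dpow m u = (\<lambda>n. complex_of_real ((real_of_int n * pi) ^ (2 * m)) * u n)"

definition mulV :: "(int \<Rightarrow> complex) \<Rightarrow> (int \<Rightarrow> complex) \<Rightarrow> (int \<Rightarrow> complex)" where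
  "mulV V u = (\<lambda>n. \<Sum>\<^sub>\<infinity>j. V (n - j) * u j)"

definition Sdom :: "bool \<Rightarrow> nat \<Rightarrow> (int \<Rightarrow> complex) \<Rightarrow> (int \<Rightarrow> complex) set" where
  "Sdom p m V = {u \<in> Hs p (real m). (\<lambda>n. Dpow m u n + mulV V u n) \<in> Hs p 0}"

definition Sop :: "nat \<Rightarrow> (int \<Rightarrow> complex) \<Rightarrow> (int \<Rightarrow> complex) \<Rightarrow> (int \<Rightarrow> complex)" where
  "Sop m V u = (\<lambda>n. Dpow m u n + mulV V u n)"

definition is_resolvent ::
  "bool \<Rightarrow> nat \<Rightarrow> (int \<Rightarrow> complex) \<Rightarrow> complex \<Rightarrow> ((int \<Rightarrow> complex) \<Rightarrow> (int \<Rightarrow> complex)) \<Rightarrow> bool" where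
  "is_resolvent p m V lam R \<longleftrightarrow>
     (\<forall>f \<in> Hs p 0. R f \<in> Sdom p m V \<and> (\<lambda>n. Sop m V (R f) n - lam * R f n) = f) \<and>
     (\<forall>u \<in> Sdom p m V. R (\<lambda>n. Sop m V u n - lam * u n) = u) \<and>
     (\<exists>C. \<forall>f \<in> Hs p 0. l2norm (R f) \<le> C * l2norm f)"

definition resolvent_set :: "bool \<Rightarrow> nat \<Rightarrow> (int \<Rightarrow> complex) \<Rightarrow> complex set" where
  "resolvent_set p m V = {lam. \<exists>R. is_resolvent p m V lam R}"

definition compact_L2op :: "bool \<Rightarrow> ((int \<Rightarrow> complex) \<Rightarrow> (int \<Rightarrow> complex)) \<Rightarrow> bool" where
  "compact_L2op p T \<longleftrightarrow>
     (\<forall>(f :: nat \<Rightarrow> int \<Rightarrow> complex) B. (\<forall>k. f k \<in> Hs p 0 \<and> l2norm (f k) \<le> B) \<longrightarrow>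
        (\<exists>r g. strict_mono r \<and> g \<in> Hs p 0 \<and>
               (\<lambda>k. l2norm (\<lambda>n. T (f (r k)) n - g n)) \<longlonglongrightarrow> 0))"

end

theory Submission
  imports Defs "HOL-Library.Diagonal_Subsequence" "HOL-Library.Nat_Bijection"
begin

text \<open>Write \<open>A = D\<^sup>2\<^sup>m + s\<^sup>2\<close> and \<open>K = A\<^sup>-\<^sup>1\<^sup>/\<^sup>2 V A\<^sup>-\<^sup>1\<^sup>/\<^sup>2\<close>, so that
  \<open>S(V) + s\<^sup>2 = A\<^sup>1\<^sup>/\<^sup>2 (I + K) A\<^sup>1\<^sup>/\<^sup>2\<close>. Peetre's inequality and \<open>V \<in> H\<^sup>-\<^sup>m\<close> bound the squared
  Hilbert--Schmidt norm of \<open>K\<close> by \<open>O(\<parallel>V\<parallel>\<^sup>2 / s)\<close>; for large \<open>s\<close> the Neumann series inverts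
  \<open>I + K\<close>, so \<open>-s\<^sup>2\<close> lies in the resolvent set and \<open>R(-s\<^sup>2)\<close> maps \<open>L\<^sub>2\<close> boundedly into \<open>H\<^sup>m\<close>.
  By the resolvent identity the same holds at every point of the resolvent set, and the
  embedding \<open>H\<^sup>m \<subseteq> L\<^sub>2\<close> is compact.\<close>

section \<open>Square-summable sequences\<close>

definition sq_summable :: "(int \<Rightarrow> complex) \<Rightarrow> bool" where
  "sq_summable h \<longleftrightarrow> (\<lambda>n. (cmod (h n))\<^sup>2) summable_on UNIV"

definition sqnorm :: "(int \<Rightarrow> complex) \<Rightarrow> real" where
  "sqnorm h = (\<Sum>\<^sub>\<infinity>n. (cmod (h n))\<^sup>2)"

lemma l2norm_eq_sqrt_sqnorm: "l2norm h = sqrt (sqnorm h)"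
  unfolding l2norm_def sqnorm_def ..

lemma sqnorm_nonneg: "sqnorm h \<ge> 0"
  unfolding sqnorm_def by (rule infsum_nonneg) auto

lemma nonneg_summable_on_if_finite_sums_bounded:
  fixes w :: "'a \<Rightarrow> real"
  assumes "\<And>n. w n \<ge> 0" "\<And>F. finite F \<Longrightarrow> sum w F \<le> B"
  shows "w summable_on UNIV \<and> infsum w UNIV \<le> B"
proof -
  have w: "w summable_on UNIV"
    by (rule nonneg_bdd_above_summable_on) (use assms in \<open>auto simp: bdd_above_def\<close>)
  moreover have "infsum w UNIV \<le> B"
    by (rule infsum_le_finite_sums[OF w]) (use assms in auto)
  ultimately show ?thesis ..
qed

lemma sq_summable_if_finite_sums_bounded:
  assumes "\<And>F. finite F \<Longrightarrow> (\<Sum>n\<in>F. (cmod (h n))\<^sup>2) \<le> B"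
  shows "sq_summable h \<and> sqnorm h \<le> B"
  using nonneg_summable_on_if_finite_sums_bounded[of "\<lambda>n. (cmod (h n))\<^sup>2" B] assms
  unfolding sq_summable_def sqnorm_def by auto

lemma sqnorm_le_if_l2norm_le:
  assumes "l2norm u \<le> C * l2norm f"
  shows "sqnorm u \<le> C\<^sup>2 * sqnorm f"
proof -
  have "sqrt (sqnorm u) \<le> \<bar>C\<bar> * sqrt (sqnorm f)"
    using assms mult_right_mono[OF abs_ge_self[of C] real_sqrt_ge_zero[OF sqnorm_nonneg[of f]]]
    unfolding l2norm_eq_sqrt_sqnorm by linarith
  then have "(sqrt (sqnorm u))\<^sup>2 \<le> (\<bar>C\<bar> * sqrt (sqnorm f))\<^sup>2"
    by (intro power_mono) (auto simp: sqnorm_nonneg)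
  then show ?thesis by (simp add: power_mult_distrib sqnorm_nonneg)
qed

lemma sum_sq_le_sqnorm: "sq_summable h \<Longrightarrow> finite F \<Longrightarrow> (\<Sum>n\<in>F. (cmod (h n))\<^sup>2) \<le> sqnorm h"
  unfolding sq_summable_def sqnorm_def by (rule finite_sum_le_infsum) auto

lemma norm_le_sqrt_sqnorm: "sq_summable h \<Longrightarrow> cmod (h n) \<le> sqrt (sqnorm h)"
  using sum_sq_le_sqnorm[of h "{n}"] real_le_rsqrt by simp

lemma L2_set_le_sqrt_sqnorm:
  "sq_summable h \<Longrightarrow> finite F \<Longrightarrow> L2_set (\<lambda>n. cmod (h n)) F \<le> sqrt (sqnorm h)"
  unfolding L2_set_def using sum_sq_le_sqnorm[of h F] by simp

lemma cauchy_schwarz_infsum: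
  assumes "sq_summable x" "sq_summable y"
  shows "(\<lambda>j. x j * y j) summable_on UNIV \<and>
         cmod (\<Sum>\<^sub>\<infinity>j. x j * y j) \<le> sqrt (sqnorm x) * sqrt (sqnorm y)"
proof -
  have "sum (\<lambda>j. norm (x j * y j)) F \<le> sqrt (sqnorm x) * sqrt (sqnorm y)" if "finite F" for F
  proof -
    have "sum (\<lambda>j. norm (x j * y j)) F = (\<Sum>j\<in>F. \<bar>cmod (x j)\<bar> * \<bar>cmod (y j)\<bar>)"
      by (simp add: norm_mult)
    also have "\<dots> \<le> L2_set (\<lambda>n. cmod (x n)) F * L2_set (\<lambda>n. cmod (y n)) F"
      by (rule L2_set_mult_ineq)
    also have "\<dots> \<le> sqrt (sqnorm x) * sqrt (sqnorm y)"
      by (intro mult_mono L2_set_le_sqrt_sqnorm assms that) (auto simp: sqnorm_nonneg)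
    finally show ?thesis .
  qed
  then have abs: "(\<lambda>j. norm (x j * y j)) summable_on UNIV"
    and le: "(\<Sum>\<^sub>\<infinity>j. norm (x j * y j)) \<le> sqrt (sqnorm x) * sqrt (sqnorm y)"
    using nonneg_summable_on_if_finite_sums_bounded[of "\<lambda>j. norm (x j * y j)"] by auto
  show ?thesis
    using abs_summable_summable[OF abs] norm_infsum_bound[OF abs] le by auto
qed

lemma norm_add_mult_sq_le:
  "(cmod (a + c * b))\<^sup>2 \<le> 2 * (cmod a)\<^sup>2 + 2 * (cmod c)\<^sup>2 * (cmod b)\<^sup>2"
proof -
  have "cmod (a + c * b) \<le> cmod a + cmod c * cmod b"
    by (metis norm_mult norm_triangle_ineq)
  then have "(cmod (a + c * b))\<^sup>2 \<le> (cmod a + cmod c * cmod b)\<^sup>2"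
    by (intro power_mono) auto
  also have "\<dots> \<le> 2 * (cmod a)\<^sup>2 + 2 * (cmod c * cmod b)\<^sup>2"
    by (smt (verit) sum_squares_bound power2_sum zero_le_power2 power2_diff)
  finally show ?thesis by (simp add: power_mult_distrib)
qed

lemma weighted_sum_lin_le:
  fixes w :: "'a \<Rightarrow> real"
  assumes "\<And>n. w n \<ge> 0"
  shows "(\<Sum>n\<in>F. w n * (cmod (u n + c * v n))\<^sup>2)
    \<le> 2 * (\<Sum>n\<in>F. w n * (cmod (u n))\<^sup>2) + 2 * (cmod c)\<^sup>2 * (\<Sum>n\<in>F. w n * (cmod (v n))\<^sup>2)"
proof -
  have "(\<Sum>n\<in>F. w n * (cmod (u n + c * v n))\<^sup>2)
      \<le> (\<Sum>n\<in>F. w n * (2 * (cmod (u n))\<^sup>2 + 2 * (cmod c)\<^sup>2 * (cmod (v n))\<^sup>2))"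
    using assms norm_add_mult_sq_le by (intro sum_mono mult_left_mono) auto
  then show ?thesis by (simp add: algebra_simps sum.distrib sum_distrib_left)
qed

lemma weighted_sq_summable_lin:
  fixes w :: "int \<Rightarrow> real"
  assumes "\<And>n. w n \<ge> 0" "(\<lambda>n. w n * (cmod (u n))\<^sup>2) summable_on UNIV"
    "(\<lambda>n. w n * (cmod (v n))\<^sup>2) summable_on UNIV"
  shows "(\<lambda>n. w n * (cmod (u n + c * v n))\<^sup>2) summable_on UNIV"
proof (rule summable_on_comparison_test)
  show "(\<lambda>n. 2 * (w n * (cmod (u n))\<^sup>2) + 2 * (cmod c)\<^sup>2 * (w n * (cmod (v n))\<^sup>2)) summable_on UNIV"
    using assms by (intro summable_on_add summable_on_cmult_right) auto
  fix n
  have "w n * (cmod (u n + c * v n))\<^sup>2 \<le> w n * (2 * (cmod (u n))\<^sup>2 + 2 * (cmod c)\<^sup>2 * (cmod (v n))\<^sup>2)"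
    using assms(1) norm_add_mult_sq_le by (intro mult_left_mono) auto
  then show "w n * (cmod (u n + c * v n))\<^sup>2
      \<le> 2 * (w n * (cmod (u n))\<^sup>2) + 2 * (cmod c)\<^sup>2 * (w n * (cmod (v n))\<^sup>2)"
    by (simp add: algebra_simps)
  show "0 \<le> w n * (cmod (u n + c * v n))\<^sup>2" using assms(1) by simp
qed

lemma sq_summable_lin: "sq_summable u \<Longrightarrow> sq_summable v \<Longrightarrow> sq_summable (\<lambda>n. u n + c * v n)"
  using weighted_sq_summable_lin[of "\<lambda>_. 1" u v c] unfolding sq_summable_def by simp

lemma infsum_sum_finite:
  fixes f :: "'b \<Rightarrow> 'a \<Rightarrow> 'c::{topological_comm_monoid_add, t2_space}"
  assumes "finite F" "\<And>i. i \<in> F \<Longrightarrow> f i summable_on A"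
  shows "(\<lambda>x. \<Sum>i\<in>F. f i x) summable_on A \<and> (\<Sum>\<^sub>\<infinity>x\<in>A. \<Sum>i\<in>F. f i x) = (\<Sum>i\<in>F. \<Sum>\<^sub>\<infinity>x\<in>A. f i x)"
  using assms
proof (induction F rule: finite_induct)
  case (insert a F)
  then have "f a summable_on A" "(\<lambda>x. \<Sum>i\<in>F. f i x) summable_on A" by auto
  with insert show ?case by (simp add: summable_on_add infsum_add)
qed simp

section \<open>Hilbert--Schmidt matrices and the Neumann series\<close>

definition mat_app :: "(int \<Rightarrow> int \<Rightarrow> complex) \<Rightarrow> (int \<Rightarrow> complex) \<Rightarrow> int \<Rightarrow> complex" where
  "mat_app M h = (\<lambda>n. \<Sum>\<^sub>\<infinity>j. M n j * h j)"

definition hs_bounded :: "(int \<Rightarrow> int \<Rightarrow> complex) \<Rightarrow> real \<Rightarrow> bool" where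
  "hs_bounded M H \<longleftrightarrow>
     (\<forall>F G. finite F \<longrightarrow> finite G \<longrightarrow> (\<Sum>n\<in>F. \<Sum>j\<in>G. (cmod (M n j))\<^sup>2) \<le> H)"

lemma hs_bounded_row: "hs_bounded M H \<Longrightarrow> sq_summable (M n) \<and> sqnorm (M n) \<le> H"
  unfolding hs_bounded_def
  by (intro sq_summable_if_finite_sums_bounded) (drule spec[of _ "{n}"], auto)

lemma hs_bounded_sum_rows:
  assumes "hs_bounded M H" "finite F"
  shows "(\<Sum>n\<in>F. sqnorm (M n)) \<le> H"
proof -
  have "\<And>n. (\<lambda>j. (cmod (M n j))\<^sup>2) summable_on UNIV"
    using hs_bounded_row[OF assms(1)] unfolding sq_summable_def by blast
  then have swap: "(\<lambda>j. \<Sum>n\<in>F. (cmod (M n j))\<^sup>2) summable_on UNIV \<and>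
      (\<Sum>\<^sub>\<infinity>j. \<Sum>n\<in>F. (cmod (M n j))\<^sup>2) = (\<Sum>n\<in>F. sqnorm (M n))"
    unfolding sqnorm_def by (intro infsum_sum_finite assms(2)) blast
  have "(\<Sum>\<^sub>\<infinity>j. \<Sum>n\<in>F. (cmod (M n j))\<^sup>2) \<le> H"
  proof (rule infsum_le_finite_sums)
    fix G :: "int set" assume "finite G"
    then show "(\<Sum>j\<in>G. \<Sum>n\<in>F. (cmod (M n j))\<^sup>2) \<le> H"
      using assms unfolding hs_bounded_def by (subst sum.swap) blast
  qed (use swap in blast)
  with swap show ?thesis by simp
qed

lemma mat_app_bound:
  assumes "hs_bounded M H" "sq_summable h"
  shows "(\<lambda>j. M n j * h j) summable_on UNIV \<and>
         cmod (mat_app M h n) \<le> sqrt (sqnorm (M n)) * sqrt (sqnorm h)"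
  using cauchy_schwarz_infsum[OF conjunct1[OF hs_bounded_row[OF assms(1)]] assms(2), of n]
  unfolding mat_app_def by auto

lemma norm_mat_app_le:
  assumes "hs_bounded M H" "sq_summable h"
  shows "cmod (mat_app M h n) \<le> sqrt H * sqrt (sqnorm h)"
proof -
  have "cmod (mat_app M h n) \<le> sqrt (sqnorm (M n)) * sqrt (sqnorm h)"
    using mat_app_bound[OF assms] by blast
  also have "\<dots> \<le> sqrt H * sqrt (sqnorm h)"
    using hs_bounded_row[OF assms(1), of n] by (intro mult_right_mono) (auto simp: sqnorm_nonneg)
  finally show ?thesis .
qed

lemma mat_app_sq_summable:
  assumes "hs_bounded M H" "sq_summable h"
  shows "sq_summable (mat_app M h) \<and> sqnorm (mat_app M h) \<le> H * sqnorm h"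
proof (rule sq_summable_if_finite_sums_bounded)
  fix F :: "int set" assume F: "finite F"
  have "(\<Sum>n\<in>F. (cmod (mat_app M h n))\<^sup>2) \<le> (\<Sum>n\<in>F. sqnorm (M n) * sqnorm h)"
  proof (rule sum_mono)
    fix n
    have "(cmod (mat_app M h n))\<^sup>2 \<le> (sqrt (sqnorm (M n)) * sqrt (sqnorm h))\<^sup>2"
      using mat_app_bound[OF assms] by (intro power_mono) auto
    then show "(cmod (mat_app M h n))\<^sup>2 \<le> sqnorm (M n) * sqnorm h"
      by (simp add: power_mult_distrib sqnorm_nonneg)
  qed
  also have "\<dots> \<le> H * sqnorm h"
    unfolding sum_distrib_right[symmetric]
    by (intro mult_right_mono hs_bounded_sum_rows assms F sqnorm_nonneg)
  finally show "(\<Sum>n\<in>F. (cmod (mat_app M h n))\<^sup>2) \<le> H * sqnorm h" .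
qed

lemma mat_app_lin:
  assumes "hs_bounded M H" "sq_summable h" "sq_summable g"
  shows "mat_app M (\<lambda>j. h j + c * g j) n = mat_app M h n + c * mat_app M g n"
proof -
  have h: "(\<lambda>j. M n j * h j) summable_on UNIV" and g: "(\<lambda>j. M n j * g j) summable_on UNIV"
    using mat_app_bound[OF assms(1,2)] mat_app_bound[OF assms(1,3)] by blast+
  have "mat_app M (\<lambda>j. h j + c * g j) n = (\<Sum>\<^sub>\<infinity>j. M n j * h j + c * (M n j * g j))"
    unfolding mat_app_def by (simp add: algebra_simps)
  also have "\<dots> = mat_app M h n + c * mat_app M g n"
    unfolding mat_app_def
    by (simp add: infsum_add[OF h summable_on_cmult_right[OF g]] infsum_cmult_right[OF g])
  finally show ?thesis .
qed

lemma mat_app_eq_0_outside: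
  assumes "\<And>n j. n \<notin> S \<Longrightarrow> j \<in> S \<Longrightarrow> M n j = 0" "\<And>j. j \<notin> S \<Longrightarrow> h j = 0" "n \<notin> S"
  shows "mat_app M h n = 0"
proof -
  have "(\<lambda>j. M n j * h j) = (\<lambda>_. 0)" using assms by (metis mult_eq_0_iff)
  then show ?thesis unfolding mat_app_def by simp
qed

lemma L2_set_sum_le:
  fixes x :: "'k \<Rightarrow> 'a \<Rightarrow> 'b::real_normed_vector"
  shows "L2_set (\<lambda>n. norm (\<Sum>k\<in>K. x k n)) F \<le> (\<Sum>k\<in>K. L2_set (\<lambda>n. norm (x k n)) F)"
proof (induction K rule: infinite_finite_induct)
  case (insert a A)
  have "L2_set (\<lambda>n. norm (\<Sum>k\<in>insert a A. x k n)) F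
      \<le> L2_set (\<lambda>n. norm (x a n) + norm (\<Sum>k\<in>A. x k n)) F"
    using insert by (intro L2_set_mono) (auto intro: norm_triangle_ineq)
  also have "\<dots> \<le> L2_set (\<lambda>n. norm (x a n)) F + L2_set (\<lambda>n. norm (\<Sum>k\<in>A. x k n)) F"
    by (rule L2_set_triangle_ineq)
  finally show ?case using insert by simp
qed (simp_all add: L2_set_def)

lemma sum_half_powers: "N \<le> P \<Longrightarrow> (\<Sum>k\<in>{N..<P}. (1/2::real)^k) = 2 * ((1/2)^N - (1/2)^P)"
  by (induction P) (auto simp: atLeastLessThanSuc le_Suc_eq)

definition neumann :: "(int \<Rightarrow> int \<Rightarrow> complex) \<Rightarrow> (int \<Rightarrow> complex) \<Rightarrow> int \<Rightarrow> complex" where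
  "neumann M g = (\<lambda>n. \<Sum>k. (-1)^k * (mat_app M ^^ k) g n)"

definition neumann_partial ::
  "(int \<Rightarrow> int \<Rightarrow> complex) \<Rightarrow> (int \<Rightarrow> complex) \<Rightarrow> nat \<Rightarrow> int \<Rightarrow> complex" where
  "neumann_partial M g N = (\<lambda>n. \<Sum>k<N. (-1)^k * (mat_app M ^^ k) g n)"

text \<open>A squared Hilbert--Schmidt bound \<open>1/4\<close> makes \<open>M\<close> a contraction by \<open>1/2\<close>, so the Neumann
  series inverts \<open>I + M\<close>.\<close>
locale hs_contraction =
  fixes M :: "int \<Rightarrow> int \<Rightarrow> complex" and g :: "int \<Rightarrow> complex"
  assumes hs: "hs_bounded M (1/4)" and g: "sq_summable g"
begin

lemma iterate_sq_summable: "sq_summable ((mat_app M ^^ k) g) \<and> sqnorm ((mat_app M ^^ k) g) \<le> (1/4)^k * sqnorm g"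
proof (induction k)
  case (Suc k)
  then show ?case
    using mat_app_sq_summable[OF hs, of "(mat_app M ^^ k) g"] by auto
qed (simp add: g)

lemma iterate_norm: "sqrt (sqnorm ((mat_app M ^^ k) g)) \<le> (1/2)^k * sqrt (sqnorm g)"
proof -
  have "sqrt (sqnorm ((mat_app M ^^ k) g)) \<le> sqrt ((1/4)^k * sqnorm g)"
    using iterate_sq_summable by auto
  also have "\<dots> = (1/2)^k * sqrt (sqnorm g)"
    by (simp add: real_sqrt_mult real_sqrt_power real_sqrt_divide)
  finally show ?thesis .
qed

lemma norm_iterate_le: "cmod ((mat_app M ^^ k) g n) \<le> (1/2)^k * sqrt (sqnorm g)"
  using norm_le_sqrt_sqnorm iterate_sq_summable iterate_norm order_trans by blast

lemma neumann_summable: "summable (\<lambda>k. (-1)^k * (mat_app M ^^ k) g n)"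
proof (rule summable_comparison_test)
  show "\<exists>N. \<forall>k\<ge>N. norm ((-1)^k * (mat_app M ^^ k) g n) \<le> (1/2)^k * sqrt (sqnorm g)"
    using norm_iterate_le by (simp add: norm_mult norm_power)
  show "summable (\<lambda>k. (1/2::real)^k * sqrt (sqnorm g))"
    by (intro summable_mult2 summable_geometric) auto
qed

lemma neumann_partial_tendsto: "(\<lambda>N. neumann_partial M g N n) \<longlonglongrightarrow> neumann M g n"
  unfolding neumann_partial_def neumann_def by (rule summable_LIMSEQ[OF neumann_summable])

lemma L2_set_neumann_tail_le:
  assumes F: "finite F"
  shows "L2_set (\<lambda>n. cmod (neumann M g n - neumann_partial M g N n)) F \<le> 2 * (1/2)^N * sqrt (sqnorm g)"
proof (rule LIMSEQ_le_const2)
  show "(\<lambda>P. L2_set (\<lambda>n. cmod (neumann_partial M g P n - neumann_partial M g N n)) F)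
      \<longlonglongrightarrow> L2_set (\<lambda>n. cmod (neumann M g n - neumann_partial M g N n)) F"
    unfolding L2_set_def by (intro tendsto_intros neumann_partial_tendsto)
  let ?x = "\<lambda>k n. (-1)^k * (mat_app M ^^ k) g n"
  have "L2_set (\<lambda>n. cmod (neumann_partial M g P n - neumann_partial M g N n)) F \<le> 2 * (1/2)^N * sqrt (sqnorm g)"
    if "P \<ge> N" for P
  proof -
    have "neumann_partial M g P n - neumann_partial M g N n = (\<Sum>k\<in>{N..<P}. ?x k n)" for n
      using that unfolding neumann_partial_def atLeast0LessThan[symmetric]
      by (simp add: sum.atLeastLessThan_concat[of 0 N P, symmetric])
    then have "L2_set (\<lambda>n. cmod (neumann_partial M g P n - neumann_partial M g N n)) F
        \<le> (\<Sum>k\<in>{N..<P}. L2_set (\<lambda>n. cmod (?x k n)) F)"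
      using L2_set_sum_le[of ?x] by simp
    also have "\<dots> \<le> (\<Sum>k\<in>{N..<P}. (1/2)^k * sqrt (sqnorm g))"
    proof (rule sum_mono)
      fix k
      have "L2_set (\<lambda>n. cmod (?x k n)) F \<le> sqrt (sqnorm ((mat_app M ^^ k) g))"
        using L2_set_le_sqrt_sqnorm iterate_sq_summable F by (simp add: norm_mult norm_power)
      then show "L2_set (\<lambda>n. cmod (?x k n)) F \<le> (1/2)^k * sqrt (sqnorm g)"
        using iterate_norm order_trans by blast
    qed
    also have "\<dots> = 2 * ((1/2)^N - (1/2)^P) * sqrt (sqnorm g)"
      by (simp add: sum_distrib_right[symmetric] sum_half_powers[OF that])
    also have "\<dots> \<le> 2 * (1/2)^N * sqrt (sqnorm g)"
      by (intro mult_right_mono) (auto simp: sqnorm_nonneg)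
    finally show ?thesis .
  qed
  then show "\<exists>N'. \<forall>P\<ge>N'. L2_set (\<lambda>n. cmod (neumann_partial M g P n - neumann_partial M g N n)) F
      \<le> 2 * (1/2)^N * sqrt (sqnorm g)" by blast
qed

lemma neumann_tail_sq_summable:
  "sq_summable (\<lambda>n. neumann M g n - neumann_partial M g N n) \<and>
   sqnorm (\<lambda>n. neumann M g n - neumann_partial M g N n) \<le> (2 * (1/2)^N * sqrt (sqnorm g))\<^sup>2"
proof (rule sq_summable_if_finite_sums_bounded)
  fix F :: "int set" assume "finite F"
  then have "(L2_set (\<lambda>n. cmod (neumann M g n - neumann_partial M g N n)) F)\<^sup>2
      \<le> (2 * (1/2)^N * sqrt (sqnorm g))\<^sup>2"
    by (intro power_mono L2_set_neumann_tail_le L2_set_nonneg) simp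
  then show "(\<Sum>n\<in>F. (cmod (neumann M g n - neumann_partial M g N n))\<^sup>2)
      \<le> (2 * (1/2)^N * sqrt (sqnorm g))\<^sup>2"
    unfolding L2_set_def by (simp add: sum_nonneg)
qed

lemma neumann_sq_summable: "sq_summable (neumann M g) \<and> sqnorm (neumann M g) \<le> 4 * sqnorm g"
  using neumann_tail_sq_summable[of 0]
  by (simp add: neumann_partial_def power_mult_distrib sqnorm_nonneg)

lemma neumann_partial_sq_summable: "sq_summable (neumann_partial M g N)"
proof (induction N)
  case (Suc N)
  have "neumann_partial M g (Suc N) = (\<lambda>n. neumann_partial M g N n + (-1)^N * (mat_app M ^^ N) g n)"
    by (simp add: neumann_partial_def)
  then show ?case using sq_summable_lin[OF Suc iterate_sq_summable[THEN conjunct1]] by simp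
qed (simp add: neumann_partial_def sq_summable_def)

lemma neumann_partial_eq:
  "neumann_partial M g N n + mat_app M (neumann_partial M g N) n = g n - (-1)^N * (mat_app M ^^ N) g n"
proof (induction N)
  case (Suc N)
  have step: "neumann_partial M g (Suc N) = (\<lambda>n. neumann_partial M g N n + (-1)^N * (mat_app M ^^ N) g n)"
    by (simp add: neumann_partial_def)
  have "mat_app M (neumann_partial M g (Suc N)) n
      = mat_app M (neumann_partial M g N) n + (-1)^N * (mat_app M ^^ Suc N) g n"
    unfolding step funpow.simps comp_def
    by (rule mat_app_lin[OF hs neumann_partial_sq_summable iterate_sq_summable[THEN conjunct1]])
  with Suc show ?case by (simp add: step algebra_simps)
qed (simp add: neumann_partial_def mat_app_def)

lemma mat_app_neumann_partial_tendsto: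
  "(\<lambda>N. mat_app M (neumann_partial M g N) n) \<longlonglongrightarrow> mat_app M (neumann M g) n"
proof -
  have bound: "cmod (mat_app M (neumann_partial M g N) n - mat_app M (neumann M g) n)
      \<le> (1/2)^N * sqrt (sqnorm g)" for N
  proof -
    let ?t = "\<lambda>j. neumann M g j - neumann_partial M g N j"
    have "mat_app M ?t n = mat_app M (neumann M g) n - mat_app M (neumann_partial M g N) n"
      using mat_app_lin[OF hs neumann_sq_summable[THEN conjunct1] neumann_partial_sq_summable, of "-1" N n]
      by simp
    then have "cmod (mat_app M (neumann_partial M g N) n - mat_app M (neumann M g) n) = cmod (mat_app M ?t n)"
      by (simp add: norm_minus_commute)
    also have "\<dots> \<le> sqrt (1/4) * sqrt (sqnorm ?t)"
      by (rule norm_mat_app_le[OF hs neumann_tail_sq_summable[THEN conjunct1]])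
    also have "\<dots> \<le> sqrt (1/4) * sqrt ((2 * (1/2)^N * sqrt (sqnorm g))\<^sup>2)"
      using neumann_tail_sq_summable[of N] by (intro mult_left_mono real_sqrt_le_mono) auto
    also have "\<dots> = (1/2)^N * sqrt (sqnorm g)"
      by (simp add: real_sqrt_divide sqnorm_nonneg)
    finally show ?thesis .
  qed
  have "(\<lambda>N. (1/2::real)^N * sqrt (sqnorm g)) \<longlonglongrightarrow> 0"
    by (intro tendsto_mult_left_zero LIMSEQ_power_zero) auto
  then have "(\<lambda>N. mat_app M (neumann_partial M g N) n - mat_app M (neumann M g) n) \<longlonglongrightarrow> 0"
    by (rule Lim_null_comparison[rotated]) (use bound in auto)
  then show ?thesis by (rule LIM_zero_cancel)
qed

lemma neumann_solves: "neumann M g n + mat_app M (neumann M g) n = g n"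
proof -
  have "(\<lambda>N. (1/2::real)^N * sqrt (sqnorm g)) \<longlonglongrightarrow> 0"
    by (intro tendsto_mult_left_zero LIMSEQ_power_zero) auto
  then have "(\<lambda>N. (-1)^N * (mat_app M ^^ N) g n) \<longlonglongrightarrow> 0"
    by (rule Lim_null_comparison[rotated]) (use norm_iterate_le in \<open>auto simp: norm_mult norm_power\<close>)
  then have "(\<lambda>N. g n - (-1)^N * (mat_app M ^^ N) g n) \<longlonglongrightarrow> g n"
    using tendsto_diff[OF tendsto_const] by fastforce
  moreover have "(\<lambda>N. g n - (-1)^N * (mat_app M ^^ N) g n) \<longlonglongrightarrow> neumann M g n + mat_app M (neumann M g) n"
    unfolding neumann_partial_eq[symmetric]
    by (intro tendsto_add neumann_partial_tendsto mat_app_neumann_partial_tendsto)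
  ultimately show ?thesis using LIMSEQ_unique by blast
qed

lemma neumann_eq_0_outside:
  assumes "\<And>n j. n \<notin> S \<Longrightarrow> j \<in> S \<Longrightarrow> M n j = 0" "\<And>j. j \<notin> S \<Longrightarrow> g j = 0" "n \<notin> S"
  shows "neumann M g n = 0"
proof -
  have "(mat_app M ^^ k) g j = 0" if "j \<notin> S" for k j
    using that
  proof (induction k arbitrary: j)
    case (Suc k)
    then show ?case using mat_app_eq_0_outside[of S M "(mat_app M ^^ k) g"] assms(1) by simp
  qed (use assms(2) in simp)
  then show ?thesis unfolding neumann_def using assms(3) by simp
qed

end

section \<open>Weights, symbols and the conjugated potential\<close>

definition weight :: "nat \<Rightarrow> int \<Rightarrow> real" where
  "weight m n = bracket n ^ (2*m)"

definition symbol :: "nat \<Rightarrow> real \<Rightarrow> int \<Rightarrow> real" where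
  "symbol m s n = (real_of_int n * pi)^(2*m) + s\<^sup>2"

lemma bracket_ge_1: "bracket n \<ge> 1"
  by (simp add: bracket_def)

lemma weight_ge_1: "weight m n \<ge> 1"
  unfolding weight_def using bracket_ge_1 by simp

lemma weight_pos: "weight m n > 0"
  using weight_ge_1[of m n] by linarith

lemma bracket_powr_eq_weight: "bracket n powr (2 * real m) = weight m n"
  using bracket_ge_1[of n] powr_realpow[of "bracket n" "2*m"] by (simp add: weight_def)

lemma symbol_ge_1: "s \<ge> 1 \<Longrightarrow> symbol m s n \<ge> 1"
proof -
  assume "s \<ge> 1"
  then have "1 \<le> s\<^sup>2" by (simp add: one_le_power)
  moreover have "0 \<le> (real_of_int n * pi)^(2*m)" by (simp add: power_mult)
  ultimately show ?thesis unfolding symbol_def by linarith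
qed

lemma symbol_ge_sq_plus_sq:
  assumes "m \<ge> 1"
  shows "(real_of_int n)\<^sup>2 + s\<^sup>2 \<le> symbol m s n"
proof (cases "n = 0")
  case False
  have "1 \<le> \<bar>real_of_int n\<bar>" using False by linarith
  then have n1: "1 \<le> (real_of_int n)\<^sup>2"
    by (metis abs_ge_self dual_order.trans one_le_power power2_abs)
  have "(real_of_int n)\<^sup>2 * 1 \<le> (real_of_int n)\<^sup>2 * pi\<^sup>2"
    using pi_ge_two by (intro mult_left_mono) (auto simp: one_le_power)
  then have le: "(real_of_int n)\<^sup>2 \<le> (real_of_int n * pi)\<^sup>2" by (simp add: power_mult_distrib)
  also have "\<dots> = (real_of_int n * pi)\<^sup>2 ^ 1" by simp
  also have "\<dots> \<le> ((real_of_int n * pi)\<^sup>2)^m"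
    using assms n1 le by (intro power_increasing) auto
  also have "\<dots> = (real_of_int n * pi)^(2*m)" by (simp add: power_mult)
  finally show ?thesis by (simp add: symbol_def)
qed (simp add: symbol_def)

lemma weight_le_symbol:
  assumes "s \<ge> 1"
  shows "weight m n \<le> 4^m * symbol m s n"
proof -
  let ?x = "\<bar>real_of_int n\<bar>"
  have weight: "weight m n = (1 + ?x)^(2*m)" by (simp add: weight_def bracket_def)
  have symbol: "symbol m s n = (?x * pi)^(2*m) + s\<^sup>2"
    unfolding symbol_def by (subst power_even_abs[symmetric]) (auto simp: abs_mult)
  have four: "(2::real)^(2*m) = 4^m" by (simp add: power_mult)
  show ?thesis
  proof (cases "?x \<le> 1")
    case True
    have "(1 + ?x)^(2*m) \<le> 2^(2*m)" using True by (intro power_mono) auto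
    also have "\<dots> = 4^m * 1" using four by simp
    also have "\<dots> \<le> 4^m * symbol m s n" using symbol_ge_1[OF assms] by (intro mult_left_mono) auto
    finally show ?thesis using weight by simp
  next
    case False
    have "(1 + ?x)^(2*m) \<le> (2 * ?x)^(2*m)" using False by (intro power_mono) auto
    also have "\<dots> = 4^m * ?x^(2*m)" using four by (simp add: power_mult_distrib)
    also have "\<dots> \<le> 4^m * (?x * pi)^(2*m)"
      using pi_ge_two by (intro mult_left_mono power_mono) (auto simp: mult_le_cancel_left1)
    also have "\<dots> \<le> 4^m * symbol m s n" by (simp add: symbol)
    finally show ?thesis using weight by simp
  qed
qed

lemma weight_diff_le: "weight m (n - j) \<le> 4^m * (weight m n + weight m j)"
proof -
  let ?M = "max (bracket n) (bracket j)"
  have "bracket (n - j) \<le> 2 * ?M"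
    unfolding bracket_def max_def by (auto split: if_splits simp: abs_if)
  then have "weight m (n - j) \<le> (2 * ?M)^(2*m)"
    unfolding weight_def by (intro power_mono) (auto simp: bracket_def)
  also have "\<dots> = 4^m * ?M^(2*m)" by (simp add: power_mult_distrib power_mult)
  also have "?M^(2*m) \<le> weight m n + weight m j"
    unfolding weight_def using bracket_ge_1[of n] bracket_ge_1[of j]
    by (cases "bracket n \<le> bracket j") (auto simp: max_def)
  finally show ?thesis by simp
qed

text \<open>Comparison with the telescoping sum of \<open>2 (1/(i - 1 + s) - 1/(i + s))\<close>.\<close>
lemma sum_inverse_sq_plus_sq_le:
  assumes "s \<ge> 1"
  shows "(\<Sum>i=1..K. 1 / ((real i)\<^sup>2 + s\<^sup>2)) \<le> 2 * (1/s - 1/(real K + s))"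
proof (induction K)
  case (Suc K)
  have pos: "real K + s > 0" "real K + 1 + s > 0" using assms by auto
  have "(real K + s) * (real K + 1 + s) \<le> (real K + 1 + s) * (real K + 1 + s)"
    using pos by (intro mult_right_mono) auto
  also have "\<dots> \<le> 2 * ((real K + 1)\<^sup>2 + s\<^sup>2)"
    using zero_le_power2[of "real K + 1 - s"] by (simp add: power2_eq_square algebra_simps)
  finally have le: "(real K + s) * (real K + 1 + s) \<le> 2 * ((real K + 1)\<^sup>2 + s\<^sup>2)" .
  have "(real K + 1)\<^sup>2 + s\<^sup>2 > 0" using assms by (simp add: add_pos_nonneg)
  then have "1 / ((real K + 1)\<^sup>2 + s\<^sup>2) \<le> 2 / ((real K + s) * (real K + 1 + s))"
    using le pos by (simp add: divide_simps)
  also have "\<dots> = 2 * (1/(real K + s) - 1/(real K + 1 + s))"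
    using pos by (simp add: field_simps)
  finally show ?case using Suc by (simp add: add_ac)
qed simp

lemma sum_inverse_sq_plus_sq_pos_le:
  assumes "s \<ge> 1" "finite P" "P \<subseteq> {0<..}"
  shows "(\<Sum>j\<in>P. 1 / ((real_of_int j)\<^sup>2 + s\<^sup>2)) \<le> 2 / s"
proof -
  define K where "K = nat (Max (insert 0 P))"
  have sub: "P \<subseteq> int ` {1..K}"
  proof
    fix x assume "x \<in> P"
    then have "x \<le> Max (insert 0 P)" "x > 0" using assms(2,3) by auto
    then show "x \<in> int ` {1..K}"
      unfolding K_def by (auto intro!: image_eqI[of x int "nat x"])
  qed
  have "(\<Sum>j\<in>P. 1 / ((real_of_int j)\<^sup>2 + s\<^sup>2)) \<le> (\<Sum>j\<in>int ` {1..K}. 1 / ((real_of_int j)\<^sup>2 + s\<^sup>2))"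
    by (rule sum_mono2[OF _ sub]) (auto simp: add_nonneg_nonneg)
  also have "\<dots> = (\<Sum>i=1..K. 1 / ((real i)\<^sup>2 + s\<^sup>2))"
    by (subst sum.reindex) auto
  also have "\<dots> \<le> 2 * (1/s - 1/(real K + s))" by (rule sum_inverse_sq_plus_sq_le[OF assms(1)])
  also have "\<dots> \<le> 2 / s" using assms(1) by simp
  finally show ?thesis .
qed

lemma sum_inverse_symbol_le:
  assumes "m \<ge> 1" "s \<ge> 1" "finite F"
  shows "(\<Sum>j\<in>F. 1 / symbol m s j) \<le> 5 / s"
proof -
  let ?f = "\<lambda>j::int. 1 / ((real_of_int j)\<^sup>2 + s\<^sup>2)"
  let ?pos = "F \<inter> {0<..}" and ?neg = "F \<inter> {..<0}"
  have "(\<Sum>j\<in>F. 1 / symbol m s j) \<le> (\<Sum>j\<in>F. ?f j)"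
  proof (rule sum_mono)
    fix j
    have "(real_of_int j)\<^sup>2 + s\<^sup>2 > 0" using assms(2) by (simp add: add_nonneg_pos)
    then show "1 / symbol m s j \<le> ?f j"
      using symbol_ge_sq_plus_sq[OF assms(1), of j s] by (intro divide_left_mono) auto
  qed
  also have "\<dots> \<le> (\<Sum>j\<in>?pos. ?f j) + (\<Sum>j\<in>?neg. ?f j) + (\<Sum>j\<in>{0}. ?f j)"
  proof -
    have "F \<subseteq> ?pos \<union> ?neg \<union> {0}" by auto
    then have "(\<Sum>j\<in>F. ?f j) \<le> (\<Sum>j\<in>?pos \<union> ?neg \<union> {0}. ?f j)"
      using assms(3) by (intro sum_mono2) (auto simp: add_nonneg_nonneg)
    also have "\<dots> = (\<Sum>j\<in>?pos. ?f j) + (\<Sum>j\<in>?neg. ?f j) + (\<Sum>j\<in>{0}. ?f j)"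
      using assms(3) by (subst sum.union_disjoint, auto)+
    finally show ?thesis .
  qed
  also have "(\<Sum>j\<in>?neg. ?f j) = (\<Sum>j\<in>uminus ` ?neg. ?f j)"
    by (subst sum.reindex) (auto simp: inj_on_def)
  also have "\<dots> \<le> 2 / s"
    using assms by (intro sum_inverse_sq_plus_sq_pos_le) auto
  also have "(\<Sum>j\<in>?pos. ?f j) \<le> 2 / s"
    using assms by (intro sum_inverse_sq_plus_sq_pos_le) auto
  also have "(\<Sum>j\<in>{0}. ?f j) \<le> 1 / s"
    using assms(2) by (simp add: power2_eq_square field_simps)
  finally show ?thesis by (simp add: add_divide_distrib[symmetric])
qed

definition neg_density :: "nat \<Rightarrow> (int \<Rightarrow> complex) \<Rightarrow> int \<Rightarrow> real" where
  "neg_density m V k = (cmod (V k))\<^sup>2 / weight m k"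

definition neg_sqnorm :: "nat \<Rightarrow> (int \<Rightarrow> complex) \<Rightarrow> real" where
  "neg_sqnorm m V = (\<Sum>\<^sub>\<infinity>k. neg_density m V k)"

lemma neg_density_nonneg: "neg_density m V k \<ge> 0"
  unfolding neg_density_def using weight_pos[of m k] by simp

lemma neg_sqnorm_nonneg: "neg_sqnorm m V \<ge> 0"
  unfolding neg_sqnorm_def by (rule infsum_nonneg) (simp add: neg_density_nonneg)

lemma neg_density_summable:
  assumes "V \<in> Hs p (- real m)"
  shows "neg_density m V summable_on UNIV"
proof -
  have "bracket k powr (2 * - real m) * (cmod (V k))\<^sup>2 = neg_density m V k" for k
  proof -
    have "bracket k powr (2 * - real m) = inverse (weight m k)"
      using bracket_powr_eq_weight[of k m] by (simp add: powr_minus)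
    then show ?thesis by (simp add: neg_density_def divide_inverse)
  qed
  with assms show ?thesis unfolding Hs_def by simp
qed

lemma sum_neg_density_le:
  assumes "V \<in> Hs p (- real m)" "finite G" "inj_on \<phi> G"
  shows "(\<Sum>j\<in>G. neg_density m V (\<phi> j)) \<le> neg_sqnorm m V"
proof -
  have "(\<Sum>j\<in>G. neg_density m V (\<phi> j)) = (\<Sum>k\<in>\<phi> ` G. neg_density m V k)"
    using assms(3) by (simp add: sum.reindex)
  also have "\<dots> \<le> neg_sqnorm m V" unfolding neg_sqnorm_def
    using assms(2) by (intro finite_sum_le_infsum neg_density_summable[OF assms(1)])
      (auto simp: neg_density_nonneg)
  finally show ?thesis .
qed

text \<open>The matrix of \<open>(D\<^sup>2\<^sup>m + s\<^sup>2)\<^sup>-\<^sup>1\<^sup>/\<^sup>2 V (D\<^sup>2\<^sup>m + s\<^sup>2)\<^sup>-\<^sup>1\<^sup>/\<^sup>2\<close>.\<close>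
definition kernel :: "nat \<Rightarrow> real \<Rightarrow> (int \<Rightarrow> complex) \<Rightarrow> int \<Rightarrow> int \<Rightarrow> complex" where
  "kernel m s V n j = V (n - j) / complex_of_real (sqrt (symbol m s n) * sqrt (symbol m s j))"

lemma norm_kernel_sq_le:
  assumes "s \<ge> 1"
  shows "(cmod (kernel m s V n j))\<^sup>2
    \<le> 16^m * neg_density m V (n - j) * (1 / symbol m s n + 1 / symbol m s j)"
proof -
  define A where "A = symbol m s n"
  define B where "B = symbol m s j"
  define c where "c = (cmod (V (n - j)))\<^sup>2"
  define w where "w = weight m (n - j)"
  have A: "A > 0" and B: "B > 0"
    using symbol_ge_1[OF assms] unfolding A_def B_def by (meson less_le_trans zero_less_one)+
  have w: "w > 0" using weight_pos by (simp add: w_def)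
  have kernel: "(cmod (kernel m s V n j))\<^sup>2 = c / (A * B)"
    using A B unfolding kernel_def c_def A_def B_def
    by (simp add: norm_divide power_divide power_mult_distrib norm_mult real_sqrt_pow2)
  have "w \<le> 4^m * (weight m n + weight m j)"
    unfolding w_def by (rule weight_diff_le)
  also have "\<dots> \<le> 4^m * (4^m * A + 4^m * B)"
    unfolding A_def B_def using weight_le_symbol[OF assms] by (intro mult_left_mono add_mono) auto
  also have "\<dots> = 16^m * (A + B)"
    by (simp add: algebra_simps power_mult_distrib[symmetric])
  finally have wle: "w \<le> 16^m * (A + B)" .
  have "c / (A * B) = (c / w) * (w / (A * B))" using w by simp
  also have "\<dots> \<le> (c / w) * (16^m * (A + B) / (A * B))"
    using A B w wle by (intro mult_left_mono divide_right_mono) (auto simp: c_def)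
  also have "\<dots> = 16^m * (c / w) * (1 / A + 1 / B)"
    using A B by (simp add: field_simps)
  finally show ?thesis unfolding kernel neg_density_def c_def w_def A_def B_def by simp
qed

lemma kernel_hs_bounded:
  assumes "m \<ge> 1" "s \<ge> 1" "V \<in> Hs p (- real m)"
  shows "hs_bounded (kernel m s V) (2 * 16^m * (5 / s) * neg_sqnorm m V)"
  unfolding hs_bounded_def
proof (intro allI impI)
  fix F G :: "int set" assume F: "finite F" and G: "finite G"
  let ?W = "\<lambda>n j. neg_density m V (n - j)" and ?a = "\<lambda>n. 1 / symbol m s n"
  have a: "\<And>n. ?a n \<ge> 0" using symbol_ge_1[OF assms(2)] by (simp add: order_trans[OF zero_le_one])
  have "(\<Sum>n\<in>F. \<Sum>j\<in>G. (cmod (kernel m s V n j))\<^sup>2)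
      \<le> (\<Sum>n\<in>F. \<Sum>j\<in>G. 16^m * ?W n j * (?a n + ?a j))"
    by (intro sum_mono norm_kernel_sq_le assms)
  also have "\<dots> = 16^m * ((\<Sum>n\<in>F. ?a n * (\<Sum>j\<in>G. ?W n j)) + (\<Sum>j\<in>G. ?a j * (\<Sum>n\<in>F. ?W n j)))"
    by (simp add: sum_distrib_left sum_distrib_right algebra_simps sum.distrib sum.swap[of _ G F])
  also have "\<dots> \<le> 16^m * ((\<Sum>n\<in>F. ?a n * neg_sqnorm m V) + (\<Sum>j\<in>G. ?a j * neg_sqnorm m V))"
    using sum_neg_density_le[OF assms(3) G] sum_neg_density_le[OF assms(3) F] a
    by (intro mult_left_mono add_mono sum_mono) (auto simp: inj_on_def)
  also have "\<dots> = 16^m * ((\<Sum>n\<in>F. ?a n) + (\<Sum>j\<in>G. ?a j)) * neg_sqnorm m V"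
    unfolding sum_distrib_right[symmetric] by (simp add: algebra_simps)
  also have "\<dots> \<le> 16^m * (5 / s + 5 / s) * neg_sqnorm m V"
    using sum_inverse_symbol_le[OF assms(1,2) F] sum_inverse_symbol_le[OF assms(1,2) G] neg_sqnorm_nonneg
    by (intro mult_right_mono mult_left_mono add_mono) auto
  finally show "(\<Sum>n\<in>F. \<Sum>j\<in>G. (cmod (kernel m s V n j))\<^sup>2) \<le> 2 * 16^m * (5 / s) * neg_sqnorm m V"
    by (simp add: mult_ac)
qed

section \<open>The shifted form-sum operator\<close>

lemma Hs_0_iff: "h \<in> Hs p 0 \<longleftrightarrow> (\<forall>n. n \<notin> freqs p \<longrightarrow> h n = 0) \<and> sq_summable h"
proof -
  have "bracket n powr 0 = 1" for n using bracket_ge_1[of n] by simp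
  then show ?thesis unfolding Hs_def sq_summable_def by simp
qed

lemma Hs_nat_iff: "h \<in> Hs p (real m) \<longleftrightarrow> (\<forall>n. n \<notin> freqs p \<longrightarrow> h n = 0) \<and>
    (\<lambda>n. weight m n * (cmod (h n))\<^sup>2) summable_on UNIV"
  unfolding Hs_def by (simp add: bracket_powr_eq_weight)

lemma Hs_nat_lin:
  "u \<in> Hs p (real m) \<Longrightarrow> v \<in> Hs p (real m) \<Longrightarrow> (\<lambda>n. u n + c * v n) \<in> Hs p (real m)"
  using weighted_sq_summable_lin[of "weight m" u v c] weight_pos[of m]
  unfolding Hs_nat_iff by (auto simp: less_imp_le)

lemma Hs_0_lin: "u \<in> Hs p 0 \<Longrightarrow> v \<in> Hs p 0 \<Longrightarrow> (\<lambda>n. u n + c * v n) \<in> Hs p 0"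
  using sq_summable_lin unfolding Hs_0_iff by auto

lemma Hs_nat_imp_Hs_0:
  assumes "u \<in> Hs p (real m)"
  shows "u \<in> Hs p 0"
proof -
  have "(\<lambda>n. (cmod (u n))\<^sup>2) summable_on UNIV"
  proof (rule summable_on_comparison_test)
    show "(\<lambda>n. weight m n * (cmod (u n))\<^sup>2) summable_on UNIV" using assms by (simp add: Hs_nat_iff)
    show "(cmod (u n))\<^sup>2 \<le> weight m n * (cmod (u n))\<^sup>2" for n
      using weight_ge_1[of m n] mult_right_mono[of 1 "weight m n" "(cmod (u n))\<^sup>2"] by simp
  qed auto
  then show ?thesis using assms unfolding Hs_0_iff Hs_nat_iff sq_summable_def by auto
qed

lemma Hs_nat_if_bounded:
  assumes "\<And>n. n \<notin> freqs p \<Longrightarrow> h n = 0"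
    and "\<And>F. finite F \<Longrightarrow> (\<Sum>n\<in>F. weight m n * (cmod (h n))\<^sup>2) \<le> B"
  shows "h \<in> Hs p (real m)"
  using nonneg_summable_on_if_finite_sums_bounded[of "\<lambda>n. weight m n * (cmod (h n))\<^sup>2" B]
    assms weight_pos[of m]
  unfolding Hs_nat_iff by (auto simp: less_imp_le)

lemma Sdom_iff: "u \<in> Sdom p m V \<longleftrightarrow> u \<in> Hs p (real m) \<and> Sop m V u \<in> Hs p 0"
  unfolding Sdom_def Sop_def by simp

locale form_sum =
  fixes m :: nat and V :: "int \<Rightarrow> complex"
  assumes m: "m \<ge> 1" and V: "V \<in> Hs True (- real m)"
begin

text \<open>Large enough for \<open>kernel_hs_bounded\<close> to give the bound \<open>1/4\<close>.\<close>
definition shift :: real where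
  "shift = max 1 (40 * 16^m * neg_sqnorm m V)"

text \<open>\<open>root\<close> is the multiplier of \<open>A\<^sup>1\<^sup>/\<^sup>2\<close>, and \<open>base_resolvent\<close> is
  \<open>A\<^sup>-\<^sup>1\<^sup>/\<^sup>2 (I + K)\<^sup>-\<^sup>1 A\<^sup>-\<^sup>1\<^sup>/\<^sup>2 = R(-s\<^sup>2)\<close>.\<close>
definition root :: "int \<Rightarrow> complex" where
  "root n = complex_of_real (sqrt (symbol m shift n))"

definition rescale :: "(int \<Rightarrow> complex) \<Rightarrow> int \<Rightarrow> complex" where
  "rescale u = (\<lambda>n. root n * u n)"

definition base_resolvent :: "(int \<Rightarrow> complex) \<Rightarrow> int \<Rightarrow> complex" where
  "base_resolvent f = (\<lambda>n. neumann (kernel m shift V) (\<lambda>j. f j / root j) n / root n)"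

lemma shift_ge_1: "shift \<ge> 1"
  unfolding shift_def by simp

lemma symbol_pos: "symbol m shift n > 0"
  using symbol_ge_1[OF shift_ge_1, of m n] by linarith

lemma root_nonzero: "root n \<noteq> 0"
  unfolding root_def using symbol_pos[of n] by simp

lemma root_mult_root: "root n * root n = complex_of_real (symbol m shift n)"
  unfolding root_def using symbol_pos[of n] by (simp flip: of_real_mult)

lemma norm_root: "cmod (root n) = sqrt (symbol m shift n)"
  unfolding root_def using symbol_pos[of n] by simp

lemma norm_root_ge_1: "cmod (root n) \<ge> 1"
  unfolding norm_root using symbol_ge_1[OF shift_ge_1, of m n] by simp

lemma norm_div_root_le: "cmod (x / root n) \<le> cmod x"
  using norm_root_ge_1[of n] by (simp add: norm_divide divide_le_eq mult_le_cancel_left1)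

lemma kernel_hs_quarter: "hs_bounded (kernel m shift V) (1/4)"
proof -
  have "2 * 16^m * (5 / shift) * neg_sqnorm m V \<le> 1/4"
    using shift_ge_1 unfolding shift_def by (simp add: field_simps)
  with kernel_hs_bounded[OF m shift_ge_1 V] show ?thesis
    unfolding hs_bounded_def by (meson order.trans)
qed

lemma kernel_eq_0_outside:
  assumes "n \<notin> freqs p" "j \<in> freqs p"
  shows "kernel m shift V n j = 0"
proof -
  have "n - j \<notin> freqs True" using assms by (cases p) (auto simp: freqs_def)
  then show ?thesis using V unfolding Hs_def kernel_def by auto
qed

lemma symbol_le_weight: "symbol m shift n \<le> (pi^(2*m) + shift\<^sup>2) * weight m n"
proof -
  have "(real_of_int n * pi)^(2*m) = \<bar>real_of_int n\<bar>^(2*m) * pi^(2*m)"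
    by (subst power_even_abs[symmetric]) (auto simp: abs_mult power_mult_distrib)
  also have "\<dots> \<le> weight m n * pi^(2*m)"
    unfolding weight_def bracket_def by (intro mult_right_mono power_mono) auto
  finally have "(real_of_int n * pi)^(2*m) \<le> weight m n * pi^(2*m)" .
  moreover have "shift\<^sup>2 \<le> shift\<^sup>2 * weight m n"
    using weight_ge_1[of m n] by (simp add: mult_le_cancel_left1)
  ultimately show ?thesis unfolding symbol_def distrib_right by (simp add: mult.commute)
qed

lemma rescale_sq_summable:
  assumes "u \<in> Hs p (real m)"
  shows "sq_summable (rescale u)"
  unfolding sq_summable_def
proof (rule summable_on_comparison_test)
  show "(\<lambda>n. (pi^(2*m) + shift\<^sup>2) * (weight m n * (cmod (u n))\<^sup>2)) summable_on UNIV"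
    using assms unfolding Hs_nat_iff by (intro summable_on_cmult_right) auto
  fix n
  have "(cmod (rescale u n))\<^sup>2 = symbol m shift n * (cmod (u n))\<^sup>2"
    unfolding rescale_def using symbol_pos[of n] by (simp add: norm_mult norm_root power_mult_distrib)
  also have "\<dots> \<le> (pi^(2*m) + shift\<^sup>2) * weight m n * (cmod (u n))\<^sup>2"
    using symbol_le_weight by (intro mult_right_mono) auto
  finally show "(cmod (rescale u n))\<^sup>2 \<le> (pi^(2*m) + shift\<^sup>2) * (weight m n * (cmod (u n))\<^sup>2)"
    by simp
qed auto

lemma mulV_eq_root_kernel:
  assumes "u \<in> Hs p (real m)"
  shows "mulV V u n = root n * mat_app (kernel m shift V) (rescale u) n"
proof -
  have "V (n - j) * u j = root n * (kernel m shift V n j * rescale u j)" for j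
    unfolding kernel_def rescale_def using root_nonzero[of n] root_nonzero[of j]
    by (simp add: root_def field_simps)
  then have "mulV V u n = (\<Sum>\<^sub>\<infinity>j. root n * (kernel m shift V n j * rescale u j))"
    unfolding mulV_def by simp
  also have "\<dots> = root n * mat_app (kernel m shift V) (rescale u) n"
    unfolding mat_app_def
    by (rule infsum_cmult_right) (use mat_app_bound[OF kernel_hs_quarter rescale_sq_summable[OF assms]] in blast)
  finally show ?thesis .
qed

lemma Sop_shift_factor:
  assumes "u \<in> Hs p (real m)"
  shows "Sop m V u n + complex_of_real (shift\<^sup>2) * u n
     = root n * (rescale u n + mat_app (kernel m shift V) (rescale u) n)"
proof -
  have "Dpow m u n + complex_of_real (shift\<^sup>2) * u n = root n * rescale u n"
    unfolding Dpow_def rescale_def mult.assoc[symmetric] root_mult_root symbol_def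
    by (simp add: algebra_simps)
  then show ?thesis unfolding Sop_def using mulV_eq_root_kernel[OF assms, of n]
    by (simp add: algebra_simps)
qed

lemma Sop_lin:
  assumes "u \<in> Hs p (real m)" "w \<in> Hs p (real m)"
  shows "Sop m V (\<lambda>n. u n + c * w n) n = Sop m V u n + c * Sop m V w n"
proof -
  have "rescale (\<lambda>n. u n + c * w n) = (\<lambda>n. rescale u n + c * rescale w n)"
    unfolding rescale_def by (auto simp: algebra_simps)
  then have "mulV V (\<lambda>n. u n + c * w n) n
      = root n * mat_app (kernel m shift V) (\<lambda>n. rescale u n + c * rescale w n) n"
    using mulV_eq_root_kernel[OF Hs_nat_lin[OF assms]] by simp
  also have "\<dots> = mulV V u n + c * mulV V w n"
    using mat_app_lin[OF kernel_hs_quarter rescale_sq_summable[OF assms(1)] rescale_sq_summable[OF assms(2)]]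
      mulV_eq_root_kernel[OF assms(1)] mulV_eq_root_kernel[OF assms(2)]
    by (simp add: algebra_simps)
  finally show ?thesis unfolding Sop_def Dpow_def by (simp add: algebra_simps)
qed

text \<open>Injectivity of \<open>S(V) + s\<^sup>2\<close>: a kernel element would be a fixed point of the contraction \<open>-K\<close>.\<close>
lemma Sop_shift_eq_0_imp:
  assumes "u \<in> Hs p (real m)" "\<And>n. Sop m V u n + complex_of_real (shift\<^sup>2) * u n = 0"
  shows "u = (\<lambda>_. 0)"
proof -
  let ?v = "rescale u"
  have v: "sq_summable ?v" by (rule rescale_sq_summable[OF assms(1)])
  have "mat_app (kernel m shift V) ?v = (\<lambda>n. - ?v n)"
  proof
    fix n
    have "?v n + mat_app (kernel m shift V) ?v n = 0"
      using Sop_shift_factor[OF assms(1), of n] assms(2) root_nonzero[of n] by simp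
    then show "mat_app (kernel m shift V) ?v n = - ?v n" by (simp add: add_eq_0_iff)
  qed
  moreover have "sqnorm (\<lambda>n. - ?v n) = sqnorm ?v" by (simp add: sqnorm_def)
  ultimately have "sqnorm ?v \<le> 1/4 * sqnorm ?v"
    using mat_app_sq_summable[OF kernel_hs_quarter v] by simp
  then have "sqnorm ?v = 0" using sqnorm_nonneg[of ?v] by linarith
  then have "?v n = 0" for n using norm_le_sqrt_sqnorm[OF v, of n] by simp
  then show ?thesis using root_nonzero unfolding rescale_def by auto
qed

lemma Sop_shift_unique:
  assumes "u \<in> Hs p (real m)" "w \<in> Hs p (real m)"
    and "\<And>n. Sop m V u n + complex_of_real (shift\<^sup>2) * u n = Sop m V w n + complex_of_real (shift\<^sup>2) * w n"
  shows "u = w"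
proof -
  let ?d = "\<lambda>n. u n + (-1) * w n"
  have "Sop m V ?d n + complex_of_real (shift\<^sup>2) * ?d n = 0" for n
  proof -
    have "Sop m V ?d n = Sop m V u n + (-1) * Sop m V w n" by (rule Sop_lin[OF assms(1,2)])
    then have "Sop m V ?d n + complex_of_real (shift\<^sup>2) * ?d n
       = (Sop m V u n + complex_of_real (shift\<^sup>2) * u n) - (Sop m V w n + complex_of_real (shift\<^sup>2) * w n)"
      by (simp add: algebra_simps)
    then show ?thesis using assms(3)[of n] by simp
  qed
  then have "?d = (\<lambda>_. 0)" by (rule Sop_shift_eq_0_imp[OF Hs_nat_lin[OF assms(1,2)]])
  then have "u n - w n = 0" for n using fun_cong[of _ _ n] by fastforce
  then show "u = w" by auto
qed

lemma neumann_rescaled: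
  assumes f: "f \<in> Hs p 0"
  defines "v \<equiv> neumann (kernel m shift V) (\<lambda>j. f j / root j)"
  shows "sq_summable v" and "sqnorm v \<le> 4 * sqnorm f"
    and "\<And>n. n \<notin> freqs p \<Longrightarrow> v n = 0"
    and "\<And>n. v n + mat_app (kernel m shift V) v n = f n / root n"
proof -
  let ?g = "\<lambda>j. f j / root j"
  have fl: "sq_summable f" and fs: "\<And>n. n \<notin> freqs p \<Longrightarrow> f n = 0"
    using f unfolding Hs_0_iff by auto
  have "sq_summable ?g \<and> sqnorm ?g \<le> sqnorm f"
  proof (rule sq_summable_if_finite_sums_bounded)
    fix F :: "int set" assume F: "finite F"
    have "(\<Sum>n\<in>F. (cmod (?g n))\<^sup>2) \<le> (\<Sum>n\<in>F. (cmod (f n))\<^sup>2)"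
      by (intro sum_mono power_mono norm_div_root_le) simp
    also have "\<dots> \<le> sqnorm f" by (rule sum_sq_le_sqnorm[OF fl F])
    finally show "(\<Sum>n\<in>F. (cmod (?g n))\<^sup>2) \<le> sqnorm f" .
  qed
  then have g: "sq_summable ?g" and g_le: "sqnorm ?g \<le> sqnorm f" by auto
  interpret hs_contraction "kernel m shift V" ?g
    using kernel_hs_quarter g by unfold_locales
  show "sq_summable v" "sqnorm v \<le> 4 * sqnorm f"
    using neumann_sq_summable g_le unfolding v_def by auto
  show "\<And>n. n \<notin> freqs p \<Longrightarrow> v n = 0"
    unfolding v_def by (rule neumann_eq_0_outside) (use kernel_eq_0_outside fs in auto)
  show "\<And>n. v n + mat_app (kernel m shift V) v n = f n / root n"
    unfolding v_def by (rule neumann_solves)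
qed

lemma weighted_sum_base_resolvent_le:
  assumes f: "f \<in> Hs p 0" and F: "finite F"
  shows "(\<Sum>n\<in>F. weight m n * (cmod (base_resolvent f n))\<^sup>2) \<le> 4^m * (4 * sqnorm f)"
proof -
  let ?v = "neumann (kernel m shift V) (\<lambda>j. f j / root j)"
  have "(\<Sum>n\<in>F. weight m n * (cmod (base_resolvent f n))\<^sup>2) \<le> (\<Sum>n\<in>F. 4^m * (cmod (?v n))\<^sup>2)"
  proof (rule sum_mono)
    fix n
    have "weight m n * (cmod (base_resolvent f n))\<^sup>2 = weight m n / symbol m shift n * (cmod (?v n))\<^sup>2"
      unfolding base_resolvent_def using symbol_pos[of n] by (simp add: norm_divide norm_root power_divide)
    also have "\<dots> \<le> 4^m * (cmod (?v n))\<^sup>2"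
      using weight_le_symbol[OF shift_ge_1, of m n] symbol_pos[of n]
      by (intro mult_right_mono) (auto simp: divide_le_eq mult.commute)
    finally show "weight m n * (cmod (base_resolvent f n))\<^sup>2 \<le> 4^m * (cmod (?v n))\<^sup>2" .
  qed
  also have "\<dots> \<le> 4^m * (4 * sqnorm f)"
    unfolding sum_distrib_left[symmetric]
    using sum_sq_le_sqnorm[OF neumann_rescaled(1)[OF f] F] neumann_rescaled(2)[OF f]
    by (intro mult_left_mono) auto
  finally show ?thesis .
qed

lemma base_resolvent_in_Hs: "f \<in> Hs p 0 \<Longrightarrow> base_resolvent f \<in> Hs p (real m)"
  by (rule Hs_nat_if_bounded[OF _ weighted_sum_base_resolvent_le])
    (auto simp: base_resolvent_def neumann_rescaled(3))

lemma base_resolvent_solves: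
  assumes f: "f \<in> Hs p 0"
  shows "Sop m V (base_resolvent f) n + complex_of_real (shift\<^sup>2) * base_resolvent f n = f n"
proof -
  have "rescale (base_resolvent f) = neumann (kernel m shift V) (\<lambda>j. f j / root j)"
    unfolding rescale_def base_resolvent_def using root_nonzero by auto
  then show ?thesis
    using Sop_shift_factor[OF base_resolvent_in_Hs[OF f], of n] neumann_rescaled(4)[OF f, of n]
      root_nonzero[of n]
    by simp
qed

lemma sqnorm_base_resolvent_le:
  assumes f: "f \<in> Hs p 0"
  shows "sqnorm (base_resolvent f) \<le> 4 * sqnorm f"
proof -
  let ?v = "neumann (kernel m shift V) (\<lambda>j. f j / root j)"
  have "sq_summable (base_resolvent f) \<and> sqnorm (base_resolvent f) \<le> sqnorm ?v"
  proof (rule sq_summable_if_finite_sums_bounded)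
    fix F :: "int set" assume F: "finite F"
    have "(\<Sum>n\<in>F. (cmod (base_resolvent f n))\<^sup>2) \<le> (\<Sum>n\<in>F. (cmod (?v n))\<^sup>2)"
      unfolding base_resolvent_def by (intro sum_mono power_mono norm_div_root_le) simp
    also have "\<dots> \<le> sqnorm ?v" by (rule sum_sq_le_sqnorm[OF neumann_rescaled(1)[OF f] F])
    finally show "(\<Sum>n\<in>F. (cmod (base_resolvent f n))\<^sup>2) \<le> sqnorm ?v" .
  qed
  then show ?thesis using neumann_rescaled(2)[OF f] by linarith
qed

lemma base_resolvent_is_resolvent:
  "is_resolvent p m V (- complex_of_real (shift\<^sup>2)) base_resolvent"
  unfolding is_resolvent_def
proof (intro conjI ballI)
  fix f assume f: "f \<in> Hs p 0"
  have eq: "(\<lambda>n. Sop m V (base_resolvent f) n - - complex_of_real (shift\<^sup>2) * base_resolvent f n) = f"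
    using base_resolvent_solves[OF f] by simp
  then show "(\<lambda>n. Sop m V (base_resolvent f) n - - complex_of_real (shift\<^sup>2) * base_resolvent f n) = f" .
  have "Sop m V (base_resolvent f) = (\<lambda>n. f n + (- complex_of_real (shift\<^sup>2)) * base_resolvent f n)"
    using base_resolvent_solves[OF f] by (auto simp: eq_diff_eq[symmetric])
  then show "base_resolvent f \<in> Sdom p m V"
    unfolding Sdom_iff
    using base_resolvent_in_Hs[OF f]
      Hs_0_lin[OF f Hs_nat_imp_Hs_0[OF base_resolvent_in_Hs[OF f]], of "- complex_of_real (shift\<^sup>2)"]
    by simp
next
  fix u assume u: "u \<in> Sdom p m V"
  let ?f = "\<lambda>n. Sop m V u n - - complex_of_real (shift\<^sup>2) * u n"
  have uH: "u \<in> Hs p (real m)" and Su: "Sop m V u \<in> Hs p 0" using u unfolding Sdom_iff by auto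
  have f: "?f \<in> Hs p 0"
    using Hs_0_lin[OF Su Hs_nat_imp_Hs_0[OF uH], of "complex_of_real (shift\<^sup>2)"] by simp
  show "base_resolvent ?f = u"
    by (rule Sop_shift_unique[OF base_resolvent_in_Hs[OF f] uH])
      (use base_resolvent_solves[OF f] in simp)
next
  have "l2norm (base_resolvent f) \<le> 2 * l2norm f" if "f \<in> Hs p 0" for f
    using real_sqrt_le_mono[OF sqnorm_base_resolvent_le[OF that]]
    by (simp add: l2norm_eq_sqrt_sqnorm real_sqrt_mult)
  then show "\<exists>C. \<forall>f\<in>Hs p 0. l2norm (base_resolvent f) \<le> C * l2norm f" by blast
qed

lemma resolvent_eq_base_resolvent:
  assumes R: "is_resolvent p m V lam R" and f: "f \<in> Hs p 0"
  shows "R f = (\<lambda>n. base_resolvent f n + (lam + complex_of_real (shift\<^sup>2)) * base_resolvent (R f) n)"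
proof -
  let ?c = "lam + complex_of_real (shift\<^sup>2)" and ?s = "complex_of_real (shift\<^sup>2)"
  let ?w = "\<lambda>n. base_resolvent f n + ?c * base_resolvent (R f) n"
  have RS: "R f \<in> Sdom p m V" and eq: "\<And>n. Sop m V (R f) n - lam * R f n = f n"
    using R f unfolding is_resolvent_def by (auto dest: fun_cong)
  have uH: "R f \<in> Hs p (real m)" using RS unfolding Sdom_iff by simp
  have u0: "R f \<in> Hs p 0" by (rule Hs_nat_imp_Hs_0[OF uH])
  show ?thesis
  proof (rule Sop_shift_unique[OF uH Hs_nat_lin[OF base_resolvent_in_Hs[OF f] base_resolvent_in_Hs[OF u0]]])
    fix n
    have "Sop m V ?w n + ?s * ?w n
      = (Sop m V (base_resolvent f) n + ?s * base_resolvent f n)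
        + ?c * (Sop m V (base_resolvent (R f)) n + ?s * base_resolvent (R f) n)"
      unfolding Sop_lin[OF base_resolvent_in_Hs[OF f] base_resolvent_in_Hs[OF u0]]
      by (simp add: algebra_simps)
    also have "\<dots> = (Sop m V (R f) n - lam * R f n) + ?c * R f n"
      unfolding base_resolvent_solves[OF f] base_resolvent_solves[OF u0] eq ..
    finally show "Sop m V (R f) n + ?s * R f n = Sop m V ?w n + ?s * ?w n"
      by (simp add: algebra_simps)
  qed
qed

lemma resolvent_weighted_bound:
  assumes R: "is_resolvent p m V lam R"
  obtains B where "\<And>f F. f \<in> Hs p 0 \<Longrightarrow> finite F \<Longrightarrow>
    (\<Sum>n\<in>F. weight m n * (cmod (R f n))\<^sup>2) \<le> B * sqnorm f"
proof -
  obtain C where C: "\<And>f. f \<in> Hs p 0 \<Longrightarrow> l2norm (R f) \<le> C * l2norm f"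
    using R unfolding is_resolvent_def by blast
  let ?c = "lam + complex_of_real (shift\<^sup>2)"
  have "(\<Sum>n\<in>F. weight m n * (cmod (R f n))\<^sup>2)
      \<le> (2 * (4^m * 4) + 2 * (cmod ?c)\<^sup>2 * (4^m * 4) * C\<^sup>2) * sqnorm f"
    if f: "f \<in> Hs p 0" and F: "finite F" for f F
  proof -
    have Rf: "R f \<in> Hs p 0"
      using R f Hs_nat_imp_Hs_0 unfolding is_resolvent_def Sdom_iff by blast
    have "(\<Sum>n\<in>F. weight m n * (cmod (R f n))\<^sup>2)
      \<le> 2 * (\<Sum>n\<in>F. weight m n * (cmod (base_resolvent f n))\<^sup>2)
        + 2 * (cmod ?c)\<^sup>2 * (\<Sum>n\<in>F. weight m n * (cmod (base_resolvent (R f) n))\<^sup>2)"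
      by (subst resolvent_eq_base_resolvent[OF R f])
        (rule weighted_sum_lin_le, simp add: less_imp_le weight_pos)
    also have "\<dots> \<le> 2 * (4^m * (4 * sqnorm f)) + 2 * (cmod ?c)\<^sup>2 * (4^m * (4 * (C\<^sup>2 * sqnorm f)))"
      using weighted_sum_base_resolvent_le[OF f F] order_trans[OF weighted_sum_base_resolvent_le[OF Rf F]]
        mult_left_mono[OF mult_left_mono[OF sqnorm_le_if_l2norm_le[OF C[OF f]]]]
      by (intro add_mono mult_left_mono) auto
    also have "\<dots> = (2 * (4^m * 4) + 2 * (cmod ?c)\<^sup>2 * (4^m * 4) * C\<^sup>2) * sqnorm f"
      by (simp add: algebra_simps)
    finally show ?thesis .
  qed
  then show ?thesis using that by blast
qed

end

section \<open>Compactness\<close>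

lemma convergent_subseq_coordinatewise:
  fixes h :: "nat \<Rightarrow> int \<Rightarrow> 'a::heine_borel"
  assumes "\<And>n. bounded (range (\<lambda>k. h k n))"
  obtains r where "strict_mono r" "\<And>n. convergent (\<lambda>k. h (r k) n)"
proof -
  define P where "P = (\<lambda>i (s::nat \<Rightarrow> nat). convergent (\<lambda>k. h (s k) (int_decode i)))"
  interpret subseqs P
  proof
    fix i and s :: "nat \<Rightarrow> nat"
    have "bounded (range (\<lambda>k. h (s k) (int_decode i)))"
      using assms[of "int_decode i"] by (rule bounded_subset) auto
    then obtain l r where "strict_mono r" "((\<lambda>k. h (s k) (int_decode i)) \<circ> r) \<longlonglongrightarrow> l"
      using bounded_imp_convergent_subsequence by blast
    then show "\<exists>r'. strict_mono r' \<and> P i (s \<circ> r')"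
      unfolding P_def convergent_def by (auto simp: o_def)
  qed
  have "convergent (\<lambda>k. h (diagseq k) n)" for n
  proof -
    have "P (int_encode n) (diagseq \<circ> (+) (Suc (int_encode n)))"
    proof (rule diagseq_holds)
      fix r s :: "nat \<Rightarrow> nat" and i assume r: "strict_mono r" and "P i s"
      then obtain L where "(\<lambda>k. h (s k) (int_decode i)) \<longlonglongrightarrow> L"
        unfolding P_def convergent_def by blast
      from LIMSEQ_subseq_LIMSEQ[OF this r] show "P i (s \<circ> r)"
        unfolding P_def convergent_def by (auto simp: o_def)
    qed
    then have "convergent (\<lambda>k. h (diagseq (k + Suc (int_encode n))) n)"
      unfolding P_def by (simp add: o_def add.commute)
    then show ?thesis unfolding convergent_def by (blast intro: LIMSEQ_offset)
  qed
  with subseq_diagseq that show thesis by blast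
qed

lemma sqnorm_le_box_plus_tail:
  assumes "\<And>F. finite F \<Longrightarrow> (\<Sum>n\<in>F. bracket n * (cmod (d n))\<^sup>2) \<le> B"
  shows "sqnorm d \<le> (\<Sum>n\<in>{- int N..int N}. (cmod (d n))\<^sup>2) + B / (real N + 1)"
proof -
  let ?box = "{- int N..int N}"
  have "sq_summable d \<and> sqnorm d \<le> (\<Sum>n\<in>?box. (cmod (d n))\<^sup>2) + B / (real N + 1)"
  proof (rule sq_summable_if_finite_sums_bounded)
    fix F :: "int set" assume F: "finite F"
    have "(\<Sum>n\<in>F. (cmod (d n))\<^sup>2) = (\<Sum>n\<in>F \<inter> ?box. (cmod (d n))\<^sup>2) + (\<Sum>n\<in>F - ?box. (cmod (d n))\<^sup>2)"
      by (rule sum.Int_Diff[OF F])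
    also have "(\<Sum>n\<in>F \<inter> ?box. (cmod (d n))\<^sup>2) \<le> (\<Sum>n\<in>?box. (cmod (d n))\<^sup>2)"
      by (rule sum_mono2) auto
    also have "(\<Sum>n\<in>F - ?box. (cmod (d n))\<^sup>2) \<le> (\<Sum>n\<in>F - ?box. bracket n * (cmod (d n))\<^sup>2 / (real N + 1))"
    proof (rule sum_mono)
      fix n assume "n \<in> F - ?box"
      then have "real N + 1 \<le> bracket n" unfolding bracket_def by auto
      then show "(cmod (d n))\<^sup>2 \<le> bracket n * (cmod (d n))\<^sup>2 / (real N + 1)"
        by (simp add: le_divide_eq mult_right_mono mult.commute)
    qed
    also have "\<dots> \<le> B / (real N + 1)"
      unfolding sum_divide_distrib[symmetric] using assms F by (intro divide_right_mono) auto
    finally show "(\<Sum>n\<in>F. (cmod (d n))\<^sup>2) \<le> (\<Sum>n\<in>?box. (cmod (d n))\<^sup>2) + B / (real N + 1)"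
      by simp
  qed
  then show ?thesis ..
qed

lemma sqnorm_tendsto_0_if_pointwise:
  assumes lim: "\<And>n. (\<lambda>k. d k n) \<longlonglongrightarrow> 0"
    and bnd: "\<And>F k. finite F \<Longrightarrow> (\<Sum>n\<in>F. bracket n * (cmod (d k n))\<^sup>2) \<le> B"
  shows "(\<lambda>k. sqnorm (d k)) \<longlonglongrightarrow> 0"
proof (rule LIMSEQ_I)
  fix e :: real assume e: "e > 0"
  define N where "N = nat \<lceil>2 * B / e\<rceil>"
  have "2 * B / e < real N + 1" unfolding N_def by linarith
  then have tail: "B / (real N + 1) < e / 2"
    using e by (simp add: field_simps)
  have "(\<lambda>k. \<Sum>n\<in>{- int N..int N}. (cmod (d k n))\<^sup>2) \<longlonglongrightarrow> (\<Sum>n\<in>{- int N..int N}. (cmod 0)\<^sup>2)"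
    by (intro tendsto_intros lim)
  then obtain K where K: "\<And>k. k \<ge> K \<Longrightarrow> (\<Sum>n\<in>{- int N..int N}. (cmod (d k n))\<^sup>2) < e / 2"
    using LIMSEQ_D[of _ 0 "e/2"] e by fastforce
  have "sqnorm (d k) < e" if "k \<ge> K" for k
    using sqnorm_le_box_plus_tail[OF bnd, of k N] K[OF that] tail by linarith
  then have "norm (sqnorm (d k) - 0) < e" if "k \<ge> K" for k
    using that sqnorm_nonneg[of "d k"] by simp
  then show "\<exists>K. \<forall>k\<ge>K. norm (sqnorm (d k) - 0) < e" by blast
qed

text \<open>Rellich's lemma: the embedding \<open>H\<^sup>1\<^sup>/\<^sup>2 \<subseteq> L\<^sub>2\<close> is compact.\<close>
lemma weighted_bounded_imp_convergent_subseq: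
  fixes h :: "nat \<Rightarrow> int \<Rightarrow> complex"
  assumes supp: "\<And>k n. n \<notin> freqs p \<Longrightarrow> h k n = 0"
    and bnd: "\<And>k F. finite F \<Longrightarrow> (\<Sum>n\<in>F. bracket n * (cmod (h k n))\<^sup>2) \<le> B"
  shows "\<exists>r g. strict_mono r \<and> g \<in> Hs p 0 \<and> (\<lambda>k. l2norm (\<lambda>n. h (r k) n - g n)) \<longlonglongrightarrow> 0"
proof -
  have sq_le: "(cmod z)\<^sup>2 \<le> bracket n * (cmod z)\<^sup>2" for z n
    using bracket_ge_1[of n] mult_right_mono[of 1 "bracket n" "(cmod z)\<^sup>2"] by simp
  have "cmod (h k n) \<le> sqrt B" for k n
    using sq_le[of "h k n" n] bnd[of "{n}" k] by (simp add: real_le_rsqrt)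
  then have "bounded (range (\<lambda>k. h k n))" for n
    unfolding bounded_iff by blast
  then obtain r where r: "strict_mono r" and conv: "\<And>n. convergent (\<lambda>k. h (r k) n)"
    using convergent_subseq_coordinatewise by blast
  define g where "g n = lim (\<lambda>k. h (r k) n)" for n
  have lim: "(\<lambda>k. h (r k) n) \<longlonglongrightarrow> g n" for n
    unfolding g_def using conv convergent_LIMSEQ_iff by blast
  have g_bnd: "(\<Sum>n\<in>F. bracket n * (cmod (g n))\<^sup>2) \<le> B" if "finite F" for F
    by (rule LIMSEQ_le_const2[where X = "\<lambda>k. \<Sum>n\<in>F. bracket n * (cmod (h (r k) n))\<^sup>2"])
      (use bnd that in \<open>auto intro!: tendsto_intros lim\<close>)
  have "g n = 0" if "n \<notin> freqs p" for n
    using LIMSEQ_unique[OF lim[of n]] supp[OF that] by simp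
  moreover have "sq_summable g"
    using sq_summable_if_finite_sums_bounded[of g B] g_bnd sq_le order_trans sum_mono by (metis (no_types, lifting))
  ultimately have g: "g \<in> Hs p 0" unfolding Hs_0_iff by blast
  define d where "d k n = h (r k) n - g n" for k n
  have d_bnd: "(\<Sum>n\<in>F. bracket n * (cmod (d k n))\<^sup>2) \<le> 4 * B" if F: "finite F" for F k
  proof -
    have "\<And>n. bracket n \<ge> 0" using bracket_ge_1 order_trans[OF zero_le_one] by blast
    then show ?thesis
      using weighted_sum_lin_le[where w = bracket and u = "h (r k)" and c = "-1" and v = g and F = F]
        bnd[OF F, of "r k"] g_bnd[OF F]
      unfolding d_def by simp
  qed
  have "(\<lambda>k. d k n) \<longlonglongrightarrow> 0" for n
    unfolding d_def using lim[of n] by (simp add: LIM_zero)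
  then have "(\<lambda>k. sqnorm (d k)) \<longlonglongrightarrow> 0"
    using d_bnd by (rule sqnorm_tendsto_0_if_pointwise)
  then have "(\<lambda>k. l2norm (\<lambda>n. h (r k) n - g n)) \<longlonglongrightarrow> 0"
    unfolding l2norm_eq_sqrt_sqnorm d_def[symmetric] using tendsto_real_sqrt by fastforce
  with r g show ?thesis by blast
qed

lemma compact_L2op_if_weighted_bounded:
  assumes supp: "\<And>f n. f \<in> Hs p 0 \<Longrightarrow> n \<notin> freqs p \<Longrightarrow> T f n = 0"
    and bnd: "\<And>f F. f \<in> Hs p 0 \<Longrightarrow> finite F \<Longrightarrow>
      (\<Sum>n\<in>F. bracket n * (cmod (T f n))\<^sup>2) \<le> B * sqnorm f"
  shows "compact_L2op p T"
  unfolding compact_L2op_def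
proof (intro allI impI)
  fix f :: "nat \<Rightarrow> int \<Rightarrow> complex" and C :: real
  assume f: "\<forall>k. f k \<in> Hs p 0 \<and> l2norm (f k) \<le> C"
  have "(\<Sum>n\<in>F. bracket n * (cmod (T (f k) n))\<^sup>2) \<le> \<bar>B\<bar> * C\<^sup>2" if "finite F" for k F
  proof -
    have "sqrt (sqnorm (f k)) \<le> C" using f by (simp add: l2norm_eq_sqrt_sqnorm)
    then have "(sqrt (sqnorm (f k)))\<^sup>2 \<le> C\<^sup>2"
      by (intro power_mono) (auto simp: sqnorm_nonneg)
    then have "sqnorm (f k) \<le> C\<^sup>2" by (simp add: sqnorm_nonneg)
    then have "\<bar>B\<bar> * sqnorm (f k) \<le> \<bar>B\<bar> * C\<^sup>2" by (intro mult_left_mono) auto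
    moreover have "B * sqnorm (f k) \<le> \<bar>B\<bar> * sqnorm (f k)"
      by (intro mult_right_mono) (auto simp: sqnorm_nonneg)
    moreover have "(\<Sum>n\<in>F. bracket n * (cmod (T (f k) n))\<^sup>2) \<le> B * sqnorm (f k)"
      using bnd[OF _ that, of "f k"] f by blast
    ultimately show ?thesis by linarith
  qed
  then show "\<exists>r g. strict_mono r \<and> g \<in> Hs p 0 \<and> (\<lambda>k. l2norm (\<lambda>n. T (f (r k)) n - g n)) \<longlonglongrightarrow> 0"
    using f supp by (intro weighted_bounded_imp_convergent_subseq) auto
qed

lemma bracket_le_weight: "m \<ge> 1 \<Longrightarrow> bracket n \<le> weight m n"
  using power_increasing[of 1 "2*m" "bracket n"] bracket_ge_1[of n] by (simp add: weight_def)

theorem proposition2: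
  fixes m :: nat and V :: "int \<Rightarrow> complex"
  assumes "m \<ge> 1"
    and "V \<in> Hs True (- real m)"
  shows "\<forall>p::bool. resolvent_set p m V \<noteq> {} \<and>
           (\<forall>lam R. is_resolvent p m V lam R \<longrightarrow> compact_L2op p R)"
proof (intro allI conjI impI)
  interpret form_sum m V using assms by unfold_locales
  fix p :: bool
  show "resolvent_set p m V \<noteq> {}"
    using base_resolvent_is_resolvent unfolding resolvent_set_def by blast
  fix lam R assume R: "is_resolvent p m V lam R"
  obtain B where B: "\<And>f F. f \<in> Hs p 0 \<Longrightarrow> finite F \<Longrightarrow>
      (\<Sum>n\<in>F. weight m n * (cmod (R f n))\<^sup>2) \<le> B * sqnorm f"
    using resolvent_weighted_bound[OF R] by auto
  show "compact_L2op p R"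
  proof (rule compact_L2op_if_weighted_bounded)
    show "R f n = 0" if "f \<in> Hs p 0" "n \<notin> freqs p" for f n
      using R that unfolding is_resolvent_def Sdom_iff Hs_nat_iff by blast
    show "(\<Sum>n\<in>F. bracket n * (cmod (R f n))\<^sup>2) \<le> B * sqnorm f"
      if "f \<in> Hs p 0" "finite F" for f F
      using B[OF that] bracket_le_weight[OF assms(1)]
      by (meson order_trans sum_mono mult_right_mono zero_le_power2)
  qed
qed

end
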